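(* Let $r\ge1$ and $n\ge 3r$ be integers, let $P$ be the path on $n$ vertices and $G=P^r$ its $r$-th power. Then $\tau(G)=r$. Moreover, for every positive integer $k$ with $n\ge k^2(r+1)$, there is a (simple) coalition game $\mathcal G$ over $G$ with $\dfrac{\kappa(\mathcal G)}{\kappa^f(\mathcal G)}\ge\left(1-\frac2k\right)\tau(G)$.
   Context: The $r$-th power $P^r$ of the path $P$ with vertices $1,\dots,n$ in order is the graph on $\{1,\dots,n\}$ in which $i\ne j$ are adjacent iff $|i-j|\le r$. Coalition game over $G=(V,E)$: a valuation $v:2^V\to\mathbb Z_{\ge0}$ with $v(\emptyset)=0$, $v(S)=0$ whenever $G[S]$ is disconnected, $v$ not identically zero; simple if all values lie in $\{0,1\}$. $\kappa^f(\mathcal G)=\min\{\sum_{i\in V}x_i: x\in\mathbb R^V_{\ge0},\ \sum_{i\in S}x_i\ge v(S)\ \forall S\subseteq V\}$ and $\kappa(\mathcal G)$ the same minimum over $x\in\mathbb Z^V_{\ge0}$. Thicket number $\tau(G)$: maximum, over collections $\mathcal H$ of nonempty, connected-inducing, pairwise intersecting vertex sets, of the minimum size of a set meeting every member of $\mathcal H$. *)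

theory Defs
  imports "HOL-Analysis.Analysis"
begin

(* A simple graph: finite vertex set V and adjacency relation adj (assumed symmetric, irreflexive). *)

(* r-th power of the path 1,...,n: vertex set {1..n}, i~j iff i<>j and |i-j| <= r *)
definition path_power_adj :: "nat \<Rightarrow> nat \<Rightarrow> nat \<Rightarrow> bool" where
  "path_power_adj r i j \<longleftrightarrow> i \<noteq> j \<and> (i \<le> j + r \<and> j \<le> i + r)"

definition induced_connected :: "('a \<Rightarrow> 'a \<Rightarrow> bool) \<Rightarrow> 'a set \<Rightarrow> bool" where
  "induced_connected adj S \<longleftrightarrow> S \<noteq> {} \<and>
     (\<forall>x\<in>S. \<forall>y\<in>S. (x, y) \<in> ({(a, b). a \<in> S \<and> b \<in> S \<and> adj a b})\<^sup>*)"

definition coalition_game :: "'a set \<Rightarrow> ('a \<Rightarrow> 'a \<Rightarrow> bool) \<Rightarrow> ('a set \<Rightarrow> nat) \<Rightarrow> bool" where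
  "coalition_game V adj v \<longleftrightarrow> v {} = 0 \<and>
     (\<forall>S. S \<subseteq> V \<and> S \<noteq> {} \<and> \<not> induced_connected adj S \<longrightarrow> v S = 0) \<and>
     (\<exists>S. S \<subseteq> V \<and> v S \<noteq> 0)"

definition simple_game :: "'a set \<Rightarrow> ('a set \<Rightarrow> nat) \<Rightarrow> bool" where
  "simple_game V v \<longleftrightarrow> (\<forall>S. S \<subseteq> V \<longrightarrow> v S \<le> 1)"

definition kappa_f :: "'a set \<Rightarrow> ('a set \<Rightarrow> nat) \<Rightarrow> real" where
  "kappa_f V v = Inf {(\<Sum>i\<in>V. x i) | x :: 'a \<Rightarrow> real.
      (\<forall>i\<in>V. x i \<ge> 0) \<and> (\<forall>S. S \<subseteq> V \<longrightarrow> (\<Sum>i\<in>S. x i) \<ge> real (v S))}"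

definition kappa_int :: "'a set \<Rightarrow> ('a set \<Rightarrow> nat) \<Rightarrow> real" where
  "kappa_int V v = Inf {(\<Sum>i\<in>V. x i) | x :: 'a \<Rightarrow> real.
      (\<forall>i\<in>V. x i \<ge> 0 \<and> x i \<in> \<int>) \<and> (\<forall>S. S \<subseteq> V \<longrightarrow> (\<Sum>i\<in>S. x i) \<ge> real (v S))}"

definition transversal_number :: "'a set \<Rightarrow> 'a set set \<Rightarrow> nat" where
  "transversal_number V H = Min {card T | T. T \<subseteq> V \<and> (\<forall>A\<in>H. A \<inter> T \<noteq> {})}"

definition thicket_number :: "'a set \<Rightarrow> ('a \<Rightarrow> 'a \<Rightarrow> bool) \<Rightarrow> nat" where
  "thicket_number V adj = Max {transversal_number V H | H.
      (\<forall>A\<in>H. A \<subseteq> V \<and> A \<noteq> {} \<and> induced_connected adj A) \<and>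
      (\<forall>A\<in>H. \<forall>B\<in>H. A \<inter> B \<noteq> {})}"

end

theory Submission
  imports Defs
begin

text \<open>
  Deleting fewer than \<open>r\<close> vertices from an interval of \<open>P\<^sup>r\<close> cannot open a gap of \<open>r\<close>
  consecutive vertices, so what remains is connected. Hence the connected sets with at least
  \<open>n + 1 - r\<close> vertices, which pairwise intersect for \<open>n \<ge> 2r - 1\<close>, admit no transversal of
  fewer than \<open>r\<close> vertices. Conversely, a pairwise intersecting family has a point \<open>p\<close> lying
  between two elements of every member (Helly's theorem on the line), and a connected set that
  crosses a window of \<open>r\<close> consecutive vertices meets it; so the window at \<open>p\<close> is a transversal.

  For the game, put \<open>L = k (r + 1)\<close> and let a coalition win iff it is connected with at least
  \<open>m = L + 1 - r\<close> players. Paying everybody \<open>1/m\<close> gives \<open>\<kappa>\<^sup>f \<le> n/m\<close>. An integral payoff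
  must pay at least \<open>r\<close> players in each of the \<open>\<lfloor>n/L\<rfloor>\<close> disjoint blocks of \<open>L\<close> consecutive
  vertices, since otherwise the unpaid part of the block is a winning coalition; so
  \<open>\<kappa> \<ge> r \<lfloor>n/L\<rfloor>\<close>, and \<open>\<lfloor>n/L\<rfloor> m \<ge> (1 - 2/k) n\<close> once \<open>n \<ge> k L\<close>.
\<close>

lemma path_power_adj_commute: "path_power_adj r i j \<longleftrightarrow> path_power_adj r j i"
  unfolding path_power_adj_def by auto

lemma induced_connected_path_power_if_gaps:
  fixes S :: "nat set"
  assumes fin: "finite S" and ne: "S \<noteq> {}"
    and gaps: "\<And>y. y \<in> S \<Longrightarrow> Min S < y \<Longrightarrow> \<exists>z\<in>S. z < y \<and> y \<le> z + r"
  shows "induced_connected (path_power_adj r) S"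
proof -
  define E where "E = {(a, b). a \<in> S \<and> b \<in> S \<and> path_power_adj r a b}"
  have E_sym: "E\<inverse> = E" unfolding E_def using path_power_adj_commute by auto
  have from_min: "(Min S, y) \<in> E\<^sup>*" if "y \<in> S" for y
    using that
  proof (induction y rule: less_induct)
    case (less y)
    show ?case
    proof (cases "Min S < y")
      case True
      then obtain z where z: "z \<in> S" "z < y" "y \<le> z + r" using gaps less.prems by blast
      then have "(z, y) \<in> E" using less.prems unfolding E_def path_power_adj_def by auto
      with less.IH[OF \<open>z < y\<close> \<open>z \<in> S\<close>] show ?thesis by (rule rtrancl_into_rtrancl)
    next
      case False
      then have "y = Min S" using Min_le[OF fin less.prems] by simp
      then show ?thesis by simp
    qed
  qed
  have to_min: "(y, Min S) \<in> E\<^sup>*" if "y \<in> S" for y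
    using rtrancl_converseI[OF from_min[OF that]] E_sym by simp
  show ?thesis
    unfolding induced_connected_def E_def[symmetric]
    using ne from_min to_min by (blast intro: rtrancl_trans)
qed

lemma induced_connected_interval_minus:
  fixes T :: "nat set"
  assumes small: "card (T \<inter> {a..b}) < r" and ne: "{a..b} - T \<noteq> {}"
  shows "induced_connected (path_power_adj r) ({a..b} - T)"
proof (rule induced_connected_path_power_if_gaps)
  let ?S = "{a..b} - T"
  show "finite ?S" by simp
  show "?S \<noteq> {}" by (rule ne)
  fix y assume y: "y \<in> ?S" "Min ?S < y"
  define below where "below = {u \<in> ?S. u < y}"
  have fin: "finite below" unfolding below_def by simp
  have "Min ?S \<in> below" using y ne Min_in[of ?S] unfolding below_def by simp
  then have "Max below \<in> below" using Max_in[OF fin] by blast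
  then have z: "Max below \<in> ?S" "Max below < y" unfolding below_def by auto
  have "{Max below<..<y} \<subseteq> T \<inter> {a..b}"
  proof
    fix u assume u: "u \<in> {Max below<..<y}"
    then have "u \<notin> below" using Max_ge[OF fin, of u] by auto
    moreover have "u \<in> {a..b}" using u z y by auto
    ultimately show "u \<in> T \<inter> {a..b}" using u unfolding below_def by auto
  qed
  then have "card {Max below<..<y} < r"
    using small card_mono[of "T \<inter> {a..b}"] by (meson finite_Int finite_atLeastAtMost le_less_trans)
  then show "\<exists>z\<in>?S. z < y \<and> y \<le> z + r" using z by auto
qed

lemma connected_path_power_meets_window:
  assumes conn: "induced_connected (path_power_adj r) B"
    and ab: "a \<in> B" "b \<in> B" "a < s" "s + r \<le> b"
  shows "\<exists>c\<in>B. s \<le> c \<and> c < s + r"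
proof -
  define E where "E = {(u, w). u \<in> B \<and> w \<in> B \<and> path_power_adj r u w}"
  have "(a, b) \<in> E\<^sup>*" using conn ab unfolding induced_connected_def E_def by blast
  moreover have "(\<exists>c\<in>B. s \<le> c \<and> c < s + r) \<or> y < s" if "(a, y) \<in> E\<^sup>*" for y
    using that
  proof (induction rule: rtrancl_induct)
    case base then show ?case using ab by simp
  next
    case (step y z)
    then have "z \<in> B" "path_power_adj r y z" unfolding E_def by auto
    \<comment> \<open>an edge starting left of the window cannot jump over it\<close>
    then show ?case using step.IH unfolding path_power_adj_def by (meson add_less_mono1 le_less_trans not_less)
  qed
  ultimately show ?thesis using ab by force
qed

lemma transversal_number_le:
  assumes "finite V" "T \<subseteq> V" "\<forall>A\<in>H. A \<inter> T \<noteq> {}"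
  shows "transversal_number V H \<le> card T"
  unfolding transversal_number_def
proof (rule Min_le)
  show "finite {card T | T. T \<subseteq> V \<and> (\<forall>A\<in>H. A \<inter> T \<noteq> {})}"
    by (rule finite_subset[of _ "card ` Pow V"]) (use assms(1) in auto)
qed (use assms in blast)

lemma transversal_number_ge:
  assumes "finite V" "\<forall>A\<in>H. A \<inter> V \<noteq> {}"
    and "\<And>T. T \<subseteq> V \<Longrightarrow> \<forall>A\<in>H. A \<inter> T \<noteq> {} \<Longrightarrow> c \<le> card T"
  shows "c \<le> transversal_number V H"
  unfolding transversal_number_def
proof (rule Min.boundedI)
  show "finite {card T | T. T \<subseteq> V \<and> (\<forall>A\<in>H. A \<inter> T \<noteq> {})}"
    by (rule finite_subset[of _ "card ` Pow V"]) (use assms(1) in auto)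
qed (use assms in auto)

lemma thicket_number_eqI:
  assumes upper: "\<And>H. \<forall>A\<in>H. A \<subseteq> V \<and> A \<noteq> {} \<and> induced_connected adj A \<Longrightarrow>
      \<forall>A\<in>H. \<forall>B\<in>H. A \<inter> B \<noteq> {} \<Longrightarrow> transversal_number V H \<le> c"
    and H0: "\<forall>A\<in>H0. A \<subseteq> V \<and> A \<noteq> {} \<and> induced_connected adj A"
      "\<forall>A\<in>H0. \<forall>B\<in>H0. A \<inter> B \<noteq> {}"
    and lower: "c \<le> transversal_number V H0"
  shows "thicket_number V adj = c"
proof -
  define M where "M = {transversal_number V H | H.
      (\<forall>A\<in>H. A \<subseteq> V \<and> A \<noteq> {} \<and> induced_connected adj A) \<and> (\<forall>A\<in>H. \<forall>B\<in>H. A \<inter> B \<noteq> {})}"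
  have M_le: "t \<le> c" if "t \<in> M" for t using that upper unfolding M_def by blast
  have "transversal_number V H0 \<in> M" using H0 unfolding M_def by blast
  moreover have "transversal_number V H0 = c" using M_le[OF calculation] lower by simp
  moreover have "finite M" using M_le by (meson atMost_iff finite_atMost finite_subset subsetI)
  ultimately have "Max M = c" using M_le by (intro Max_eqI) auto
  then show ?thesis unfolding thicket_number_def M_def .
qed

text \<open>Helly's theorem on the line, witnessed by the largest minimum.\<close>

lemma pairwise_intersecting_common_span_point:
  fixes H :: "'a::linorder set set"
  assumes fin: "finite H" and ne: "H \<noteq> {}" and HA: "\<forall>A\<in>H. finite A \<and> A \<noteq> {}"
    and Hi: "\<forall>A\<in>H. \<forall>B\<in>H. A \<inter> B \<noteq> {}"
  shows "\<exists>p\<in>\<Union>H. \<forall>B\<in>H. (\<exists>a\<in>B. a \<le> p) \<and> (\<exists>b\<in>B. p \<le> b)"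
proof -
  have "Max (Min ` H) \<in> Min ` H" using fin ne by simp
  then obtain A0 where A0: "A0 \<in> H" "Min A0 = Max (Min ` H)" by auto
  have "\<forall>B\<in>H. (\<exists>a\<in>B. a \<le> Min A0) \<and> (\<exists>b\<in>B. Min A0 \<le> b)"
  proof
    fix B assume B: "B \<in> H"
    have "Min B \<in> B" "Min B \<le> Min A0" using B HA A0 fin by auto
    moreover obtain x where "x \<in> A0" "x \<in> B" using Hi A0(1) B by blast
    moreover have "Min A0 \<le> x" using HA A0(1) \<open>x \<in> A0\<close> by simp
    ultimately show "(\<exists>a\<in>B. a \<le> Min A0) \<and> (\<exists>b\<in>B. Min A0 \<le> b)" by blast
  qed
  moreover have "Min A0 \<in> \<Union>H" using A0(1) HA by (meson Min_in UnionI)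
  ultimately show ?thesis by blast
qed

lemma transversal_number_path_power_le:
  fixes r n :: nat
  assumes r1: "1 \<le> r" and rn: "r \<le> n"
    and HV: "\<forall>A\<in>H. A \<subseteq> {1..n} \<and> A \<noteq> {} \<and> induced_connected (path_power_adj r) A"
    and Hi: "\<forall>A\<in>H. \<forall>B\<in>H. A \<inter> B \<noteq> {}"
  shows "transversal_number {1..n} H \<le> r"
proof (cases "H = {}")
  case True
  then show ?thesis using transversal_number_le[of "{1..n}" "{}" H] by simp
next
  case False
  have "finite H" using HV by (meson Pow_iff finite_Pow_iff finite_atLeastAtMost finite_subset subsetI)
  then obtain p where p: "p \<in> \<Union>H" and span: "\<forall>B\<in>H. (\<exists>a\<in>B. a \<le> p) \<and> (\<exists>b\<in>B. p \<le> b)"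
    using pairwise_intersecting_common_span_point[OF _ False _ Hi] HV
    by (meson finite_atLeastAtMost finite_subset)
  have p_range: "1 \<le> p" "p \<le> n" using p HV by fastforce+
  define s where "s = min p (n + 1 - r)"
  define W where "W = {s..<s + r}"
  have s: "1 \<le> s" "s \<le> p" "p < s + r" "s + r \<le> n + 1"
    using p_range r1 rn unfolding s_def by auto
  have "B \<inter> W \<noteq> {}" if B: "B \<in> H" for B
  proof -
    obtain a b where ab: "a \<in> B" "a \<le> p" "b \<in> B" "p \<le> b" using span B by blast
    show ?thesis
    proof (cases "a < s \<and> s + r \<le> b")
      case True
      then show ?thesis using connected_path_power_meets_window[of r B a b s] HV B ab
        unfolding W_def by fastforce
    next
      case False
      then show ?thesis using ab s unfolding W_def by (cases "s \<le> a") auto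
    qed
  qed
  moreover have "W \<subseteq> {1..n}" "card W = r" using s unfolding W_def by auto
  ultimately show ?thesis using transversal_number_le[of "{1..n}" W H] by simp
qed

lemma subsets_intersect_if_card_sum_gt:
  assumes "finite V" "A \<subseteq> V" "B \<subseteq> V" "card V < card A + card B"
  shows "A \<inter> B \<noteq> {}"
proof
  assume "A \<inter> B = {}"
  then have "card A + card B = card (A \<union> B)"
    using assms(1-3) by (metis card_Un_disjoint finite_subset)
  also have "\<dots> \<le> card V" using assms(1-3) by (intro card_mono) auto
  finally show False using assms(4) by simp
qed

lemma transversal_number_large_connected_ge:
  fixes r n :: nat
  assumes "r \<le> n"
  shows "r \<le> transversal_number {1..n}
    {A. A \<subseteq> {1..n} \<and> induced_connected (path_power_adj r) A \<and> n + 1 - r \<le> card A}"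
proof (rule transversal_number_ge)
  fix T assume T: "T \<subseteq> {1..n}"
    and hits: "\<forall>A\<in>{A. A \<subseteq> {1..n} \<and> induced_connected (path_power_adj r) A \<and> n + 1 - r \<le> card A}.
      A \<inter> T \<noteq> {}"
  show "r \<le> card T"
  proof (rule ccontr)
    assume small: "\<not> r \<le> card T"
    have card_rest: "card ({1..n} - T) = n - card T"
      using T by (simp add: card_Diff_subset finite_subset)
    then have large: "n + 1 - r \<le> card ({1..n} - T)" using small by simp
    have "{1..n} - T \<noteq> {}" using card_rest small assms by (metis card.empty diff_is_0_eq le_trans nat_le_linear)
    then have "induced_connected (path_power_adj r) ({1..n} - T)"
      using T small by (intro induced_connected_interval_minus) (simp_all add: Int_absorb2)
    then show False using hits large by blast
  qed
qed (auto simp: induced_connected_def)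

lemma thicket_number_path_power:
  fixes r n :: nat
  assumes r1: "1 \<le> r" and n: "2 * r \<le> n + 1"
  shows "thicket_number {1..n} (path_power_adj r) = r"
proof (rule thicket_number_eqI)
  let ?H0 = "{A. A \<subseteq> {1..n} \<and> induced_connected (path_power_adj r) A \<and> n + 1 - r \<le> card A}"
  show "\<forall>A\<in>?H0. A \<subseteq> {1..n} \<and> A \<noteq> {} \<and> induced_connected (path_power_adj r) A"
    by (auto simp: induced_connected_def)
  show "\<forall>A\<in>?H0. \<forall>B\<in>?H0. A \<inter> B \<noteq> {}"
  proof (intro ballI)
    fix A B assume "A \<in> ?H0" "B \<in> ?H0"
    then show "A \<inter> B \<noteq> {}"
      using n by (intro subsets_intersect_if_card_sum_gt[of "{1..n}"]) auto
  qed
  show "r \<le> transversal_number {1..n} ?H0"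
    using r1 n by (intro transversal_number_large_connected_ge) simp
qed (use r1 n transversal_number_path_power_le in auto)

definition stabilizing_payoff :: "'a set \<Rightarrow> ('a set \<Rightarrow> nat) \<Rightarrow> ('a \<Rightarrow> real) \<Rightarrow> bool" where
  "stabilizing_payoff V v x \<longleftrightarrow> (\<forall>i\<in>V. x i \<ge> 0) \<and> (\<forall>S. S \<subseteq> V \<longrightarrow> (\<Sum>i\<in>S. x i) \<ge> real (v S))"

lemma kappa_f_eq: "kappa_f V v = Inf {sum x V | x. stabilizing_payoff V v x}"
  unfolding kappa_f_def stabilizing_payoff_def ..

lemma kappa_int_eq:
  "kappa_int V v = Inf {sum x V | x. stabilizing_payoff V v x \<and> (\<forall>i\<in>V. x i \<in> \<int>)}"
  unfolding kappa_int_def stabilizing_payoff_def by (intro arg_cong[where f=Inf]) blast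

lemma kappa_f_le_sum:
  assumes "stabilizing_payoff V v x"
  shows "kappa_f V v \<le> sum x V"
  unfolding kappa_f_eq
proof (rule cInf_lower)
  show "bdd_below {sum x V | x. stabilizing_payoff V v x}"
    by (rule bdd_belowI[of _ 0]) (auto simp: stabilizing_payoff_def intro: sum_nonneg)
qed (use assms in blast)

lemma value_le_kappa_f:
  assumes "stabilizing_payoff V v x"
  shows "real (v V) \<le> kappa_f V v"
  unfolding kappa_f_eq
  by (rule cInf_greatest) (use assms in \<open>auto simp: stabilizing_payoff_def\<close>)

lemma kappa_int_ge:
  assumes "stabilizing_payoff V v x" "\<forall>i\<in>V. x i \<in> \<int>"
    and "\<And>y. stabilizing_payoff V v y \<Longrightarrow> \<forall>i\<in>V. y i \<in> \<int> \<Longrightarrow> c \<le> sum y V"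
  shows "c \<le> kappa_int V v"
  unfolding kappa_int_eq by (rule cInf_greatest) (use assms in auto)

definition connected_threshold_game :: "'a set \<Rightarrow> ('a \<Rightarrow> 'a \<Rightarrow> bool) \<Rightarrow> nat \<Rightarrow> 'a set \<Rightarrow> nat" where
  "connected_threshold_game V adj m S =
    (if S \<subseteq> V \<and> induced_connected adj S \<and> m \<le> card S then 1 else 0)"

lemma coalition_game_connected_threshold_game:
  assumes "1 \<le> m" "m \<le> card V" "induced_connected adj V"
  shows "coalition_game V adj (connected_threshold_game V adj m)"
  using assms unfolding coalition_game_def connected_threshold_game_def by auto

lemma simple_game_connected_threshold_game:
  "simple_game V (connected_threshold_game V adj m)"
  unfolding simple_game_def connected_threshold_game_def by simp

lemma stabilizing_payoff_connected_threshold_const: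
  assumes "1 \<le> m" "1 / real m \<le> c"
  shows "stabilizing_payoff V (connected_threshold_game V adj m) (\<lambda>_. c)"
  unfolding stabilizing_payoff_def
proof (intro conjI ballI allI impI)
  have "0 < 1 / real m" using assms(1) by simp
  with assms(2) have c: "0 < c" by linarith
  then show "0 \<le> c" for i by simp
  fix S assume "S \<subseteq> V"
  show "real (connected_threshold_game V adj m S) \<le> (\<Sum>i\<in>S. c)"
  proof (cases "m \<le> card S")
    case True
    have "1 \<le> real (card S) / real m" using True assms(1) by simp
    also have "\<dots> = real (card S) * (1 / real m)" by simp
    also have "\<dots> \<le> real (card S) * c" using assms(2) by (intro mult_left_mono) auto
    finally show ?thesis using c by (simp add: connected_threshold_game_def)
  next
    case False
    then show ?thesis using c by (simp add: connected_threshold_game_def)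
  qed
qed

lemma card_nonzero_le_sum_Ints:
  assumes "finite V" "\<forall>i\<in>V. 0 \<le> x i \<and> x i \<in> \<int>"
  shows "real (card {i\<in>V. x i \<noteq> 0}) \<le> sum x V"
proof -
  have "real (card {i\<in>V. x i \<noteq> 0}) = (\<Sum>i\<in>{i\<in>V. x i \<noteq> 0}. 1)" by simp
  also have "\<dots> \<le> (\<Sum>i\<in>{i\<in>V. x i \<noteq> 0}. x i)"
    using assms(2) Ints_nonzero_abs_ge1 by (intro sum_mono) fastforce
  also have "\<dots> \<le> sum x V" using assms by (intro sum_mono2) auto
  finally show ?thesis .
qed

lemma card_ge_disjoint_blocks:
  assumes "finite T" and disj: "\<And>i j. i \<noteq> j \<Longrightarrow> B i \<inter> B j = {}"
    and blocks: "\<And>j. j < q \<Longrightarrow> r \<le> card (T \<inter> B j)"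
  shows "q * r \<le> card T"
proof -
  have "q * r = (\<Sum>j<q. r)" by simp
  also have "\<dots> \<le> (\<Sum>j<q. card (T \<inter> B j))" using blocks by (intro sum_mono) auto
  also have "\<dots> = card (\<Union>j<q. T \<inter> B j)"
    using assms(1) disj by (intro card_UN_disjoint[symmetric]) auto
  also have "\<dots> \<le> card T" using assms(1) by (intro card_mono) auto
  finally show ?thesis .
qed

lemma integral_payoff_connected_threshold_ge:
  fixes L q r n :: nat
  assumes rL: "r \<le> L" and qL: "q * L \<le> n"
    and x: "stabilizing_payoff {1..n} (connected_threshold_game {1..n} (path_power_adj r) (L + 1 - r)) x"
      "\<forall>i\<in>{1..n}. x i \<in> \<int>"
  shows "real (q * r) \<le> sum x {1..n}"
proof -
  define T where "T = {i\<in>{1..n}. x i \<noteq> 0}"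
  define B where "B j = {j * L + 1 .. j * L + L}" for j
  have "r \<le> card (T \<inter> B j)" if "j < q" for j
  proof (rule ccontr)
    assume small: "\<not> r \<le> card (T \<inter> B j)"
    have "B j \<subseteq> {1..n}"
      using qL mult_le_mono1[of "Suc j" q L] that unfolding B_def by auto
    then have zero: "sum x (B j - T) = 0" unfolding T_def by (intro sum.neutral) auto
    have "card (B j - T) = L - card (T \<inter> B j)"
      unfolding B_def by (simp add: card_Diff_subset_Int Int_commute)
    then have large: "L + 1 - r \<le> card (B j - T)" "0 < card (B j - T)"
      using small rL by auto
    then have "B j - T \<noteq> {}" by (metis card.empty less_irrefl)
    then have "induced_connected (path_power_adj r) (B j - T)"
      using small unfolding B_def by (intro induced_connected_interval_minus) auto
    then have "connected_threshold_game {1..n} (path_power_adj r) (L + 1 - r) (B j - T) = 1"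
      using large \<open>B j \<subseteq> {1..n}\<close> unfolding connected_threshold_game_def by auto
    then show False using x(1) zero \<open>B j \<subseteq> {1..n}\<close> unfolding stabilizing_payoff_def
      by (metis Diff_subset dual_order.trans of_nat_1 not_one_le_zero)
  qed
  moreover have "B i \<inter> B j = {}" if "i \<noteq> j" for i j
    using that mult_le_mono1[of "Suc i" j L] mult_le_mono1[of "Suc j" i L]
    unfolding B_def by (cases "i < j") auto
  ultimately have "q * r \<le> card T"
    using card_ge_disjoint_blocks[of T B q r] unfolding T_def by auto
  also have "real (card T) \<le> sum x {1..n}"
    unfolding T_def using x unfolding stabilizing_payoff_def by (intro card_nonzero_le_sum_Ints) auto
  finally show ?thesis by simp
qed

lemma block_count_estimate:
  fixes k r n :: nat
  assumes r: "1 \<le> r" and k: "0 < k" and n: "k * (k * (r + 1)) \<le> n"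
  shows "(1 - 2 / real k) * real n \<le> real (n div (k * (r + 1))) * real (k * (r + 1) + 1 - r)"
proof -
  define L where "L = k * (r + 1)"
  define q where "q = n div L"
  define m where "m = real L + 1 - real r"
  have "r + 1 \<le> L" unfolding L_def using k mult_le_mono1[of 1 k "r + 1"] by simp
  then have m_of_nat: "real (L + 1 - r) = m" unfolding m_def by (simp add: of_nat_diff)
  have L: "real L = real k * (real r + 1)" "0 < real L" unfolding L_def using k by (simp_all add: algebra_simps add_pos_nonneg)
  have "n < q * L + L"
    using div_mult_mod_eq[of n L] mod_less_divisor[of L n] L(2) unfolding q_def by linarith
  then have "real n < (real q + 1) * real L" by (simp add: distrib_right flip: of_nat_mult of_nat_add)
  then have "real n / real L < real q + 1" using L(2) by (simp add: divide_less_eq)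
  then have "real n / real L - 1 \<le> real q" by linarith
  moreover have "0 \<le> m" unfolding m_def using \<open>r + 1 \<le> L\<close> by simp
  ultimately have "(real n / real L - 1) * m \<le> real q * m" by (rule mult_right_mono)
  then have "real n / real L * m - m \<le> real q * m" by (simp add: left_diff_distrib)
  moreover have "real n - real n / real k \<le> real n / real L * m"
  proof -
    have "real n / real L * (real r + 1) = real n / real k" using L k by simp
    moreover have "real n / real L * (real L - (real r + 1)) \<le> real n / real L * m"
      unfolding m_def by (intro mult_left_mono) auto
    ultimately show ?thesis using L(2) by (simp add: algebra_simps)
  qed
  moreover have "m \<le> real n / real k"
  proof -
    have "real (k * L) \<le> real n" using n unfolding L_def by (simp only: of_nat_le_iff)
    then have "real k * real L \<le> real n" by simp
    then have "real L \<le> real n / real k" using k by (simp add: pos_le_divide_eq mult.commute)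
    then show ?thesis unfolding m_def using r by simp
  qed
  ultimately have "real n - 2 * (real n / real k) \<le> real q * m" by linarith
  then show ?thesis unfolding q_def L_def[symmetric] m_of_nat by (simp add: algebra_simps)
qed

lemma path_power_game_ratio:
  fixes r n k :: nat
  assumes r: "1 \<le> r" and k: "0 < k" and n: "k^2 * (r + 1) \<le> n"
  shows "\<exists>v. coalition_game {1..n} (path_power_adj r) v \<and> simple_game {1..n} v \<and>
    (1 - 2 / real k) * real r \<le> kappa_int {1..n} v / kappa_f {1..n} v"
proof -
  define L where "L = k * (r + 1)"
  define m where "m = L + 1 - r"
  define q where "q = n div L"
  define v where "v = connected_threshold_game {1..n} (path_power_adj r) m"
  have rL: "r + 1 \<le> L" unfolding L_def using k mult_le_mono1[of 1 k "r + 1"] by simp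
  have kL: "k * L \<le> n" using n unfolding L_def by (simp add: power2_eq_square mult.assoc del: mult_Suc_right add_mult_distrib2 distrib_left)
  moreover have "L \<le> k * L" using k by simp
  ultimately have m: "1 \<le> m" "m \<le> n" using rL r unfolding m_def by linarith+
  have "induced_connected (path_power_adj r) {1..n}"
    using induced_connected_interval_minus[of "{}" 1 n r] r m by simp
  then have game: "coalition_game {1..n} (path_power_adj r) v" and win: "v {1..n} = 1"
    using m unfolding v_def
    by (auto intro: coalition_game_connected_threshold_game simp: connected_threshold_game_def)
  have uniform: "stabilizing_payoff {1..n} v (\<lambda>_. 1 / real m)"
    unfolding v_def using m by (intro stabilizing_payoff_connected_threshold_const) auto
  have kf_pos: "0 < kappa_f {1..n} v"
    using value_le_kappa_f[OF uniform] win by simp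
  have kf_le: "kappa_f {1..n} v \<le> real n / real m"
    using kappa_f_le_sum[OF uniform] by simp
  have ki_ge: "real (q * r) \<le> kappa_int {1..n} v"
  proof (rule kappa_int_ge)
    show "stabilizing_payoff {1..n} v (\<lambda>_. 1)"
      unfolding v_def using m by (intro stabilizing_payoff_connected_threshold_const) auto
    show "real (q * r) \<le> sum y {1..n}"
      if "stabilizing_payoff {1..n} v y" "\<forall>i\<in>{1..n}. y i \<in> \<int>" for y
      using that rL unfolding v_def m_def q_def
      by (intro integral_payoff_connected_threshold_ge) auto
  qed simp
  have "(1 - 2 / real k) * real n \<le> real q * real m"
    unfolding q_def m_def L_def by (rule block_count_estimate[OF r k kL[unfolded L_def]])
  then have "(1 - 2 / real k) * real r * real n \<le> real q * real m * real r"
    by (metis mult.commute mult.left_commute mult_left_mono of_nat_0_le_iff)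
  moreover have "real (q * r) / (real n / real m) = real q * real m * real r / real n"
    by simp
  ultimately have "(1 - 2 / real k) * real r \<le> real (q * r) / (real n / real m)"
    using m by (simp add: pos_le_divide_eq mult.commute mult.left_commute)
  also have "\<dots> \<le> real (q * r) / kappa_f {1..n} v"
    using kf_le kf_pos m by (intro divide_left_mono) auto
  also have "\<dots> \<le> kappa_int {1..n} v / kappa_f {1..n} v"
    using ki_ge kf_pos by (intro divide_right_mono) auto
  finally show ?thesis using game simple_game_connected_threshold_game unfolding v_def by blast
qed

theorem theorem6p3:
  fixes r n :: nat
  assumes "r \<ge> 1" and "n \<ge> 3 * r"
  shows "thicket_number {1..n} (path_power_adj r) = r \<and>
    (\<forall>k::nat. k > 0 \<and> n \<ge> k^2 * (r + 1) \<longrightarrow>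
      (\<exists>v. coalition_game {1..n} (path_power_adj r) v \<and> simple_game {1..n} v \<and>
          kappa_int {1..n} v / kappa_f {1..n} v
            \<ge> (1 - 2 / real k) * real (thicket_number {1..n} (path_power_adj r))))"
proof -
  have "thicket_number {1..n} (path_power_adj r) = r"
    using assms by (intro thicket_number_path_power) auto
  then show ?thesis using path_power_game_ratio[OF assms(1)] by simp
qed

end
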